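(* Let $d_x, d_1, d_2 \ge 1$ be integers, let $\sigma:\mathbb{R}\to\mathbb{R}$ be a continuous piecewise linear function with $p\ge 2$ linear pieces, and let $\alpha_1,\alpha_2\in(0,1]$ be such that $\alpha_1 d_1$ and $\alpha_2 d_2$ are positive integers. Consider the architecture of fully connected networks $f_W:\mathbb{R}^{d_x}\to\mathbb{R}$ with two hidden layers of widths $\alpha_1 d_1$ and $\alpha_2 d_2$ (obtained by removing entire neurons, i.e. structured pruning), $$f_W(x) = W^3\,\sigma\big(W^2\,\sigma(W^1 x + b^1) + b^2\big) + b^3,$$ with $\sigma$ applied coordinatewise and $W^1\in\mathbb{R}^{\alpha_1 d_1\times d_x}$, $W^2\in\mathbb{R}^{\alpha_2 d_2\times \alpha_1 d_1}$, $W^3\in\mathbb{R}^{1\times \alpha_2 d_2}$, $b^1,b^2,b^3$ of matching dimensions. Then the memorization capacity of this architecture is at most $$\alpha_1\alpha_2 d_1 d_2\, p(p-1) + \alpha_2 d_2(p-1) + 2.$$ In particular, for ReLU ($p=2$) it is at most $2\alpha_1\alpha_2 d_1 d_2 + \alpha_2 d_2 + 2$.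
   Context: Memorization capacity: for a network architecture $f_W$ with learnable parameters $W$ and input dimension $d_x$, the memorization capacity is the largest $N$ such that for every choice of inputs $x_1,\dots,x_N\in\mathbb{R}^{d_x}$ (pairwise distinct) and every choice of labels $y_1,\dots,y_N\in[-1,1]$, there exist parameters $W$ with $f_W(x_i)=y_i$ for all $1\le i\le N$. A function $\mathbb{R}\to\mathbb{R}$ has "$p$ linear pieces" if $\mathbb{R}$ can be partitioned into $p$ intervals on each of which it is affine (and not fewer). *)

theory Defs
  imports "HOL-Analysis.Analysis"
begin

text \<open>\<open>\<sigma>\<close> can be written as an affine function on each of at most \<open>n\<close> intervals
  partitioning \<open>\<real>\<close> (pieces are allowed to be empty, so this is monotone in \<open>n\<close>).\<close>
definition affine_pieces_le :: "(real \<Rightarrow> real) \<Rightarrow> nat \<Rightarrow> bool" where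
  "affine_pieces_le \<sigma> n \<longleftrightarrow>
     (\<exists>I :: nat \<Rightarrow> real set.
        (\<forall>i<n. is_interval (I i)) \<and>
        (\<forall>i<n. \<forall>j<n. i \<noteq> j \<longrightarrow> I i \<inter> I j = {}) \<and>
        (\<Union>i<n. I i) = UNIV \<and>
        (\<forall>i<n. \<exists>a b. \<forall>x\<in>I i. \<sigma> x = a * x + b))"

definition linear_pieces :: "(real \<Rightarrow> real) \<Rightarrow> nat \<Rightarrow> bool" where
  "linear_pieces \<sigma> p \<longleftrightarrow> affine_pieces_le \<sigma> p \<and> \<not> affine_pieces_le \<sigma> (p - 1)"

text \<open>Row \<open>j\<close> of \<open>W1\<close> is \<open>W1 j\<close>;
  \<open>W2 m j\<close> is the entry (m,j) of \<open>W2\<close>; \<open>W3 m\<close> the m-th entry of \<open>W3\<close>.\<close>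
definition net2 ::
  "(real \<Rightarrow> real) \<Rightarrow> nat \<Rightarrow> nat \<Rightarrow> (nat \<Rightarrow> real^'n::finite) \<Rightarrow> (nat \<Rightarrow> real) \<Rightarrow>
   (nat \<Rightarrow> nat \<Rightarrow> real) \<Rightarrow> (nat \<Rightarrow> real) \<Rightarrow> (nat \<Rightarrow> real) \<Rightarrow> real \<Rightarrow> real^'n \<Rightarrow> real" where
  "net2 \<sigma> k1 k2 W1 b1 W2 b2 W3 b3 x =
     (\<Sum>m<k2. W3 m * \<sigma> ((\<Sum>j<k1. W2 m j * \<sigma> (W1 j \<bullet> x + b1 j)) + b2 m)) + b3"

definition memorizes :: "'n::finite itself \<Rightarrow> (real \<Rightarrow> real) \<Rightarrow> nat \<Rightarrow> nat \<Rightarrow> nat \<Rightarrow> bool" where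
  "memorizes _ \<sigma> k1 k2 N \<longleftrightarrow>
     (\<forall>(X :: nat \<Rightarrow> real^'n) (y :: nat \<Rightarrow> real).
        inj_on X {..<N} \<and> (\<forall>i<N. y i \<in> {-1..1}) \<longrightarrow>
        (\<exists>W1 b1 W2 b2 W3 b3. \<forall>i<N. net2 \<sigma> k1 k2 W1 b1 W2 b2 W3 b3 (X i) = y i))"

end

theory Submission
  imports Defs
begin

text \<open>Along a line \<open>t \<mapsto> t *\<^sub>R e\<close> every neuron of the network is a piecewise affine
  function of \<open>t\<close>. Composing with \<open>\<sigma>\<close>, which has at most \<open>q = p - 1\<close> breakpoints, turns
  \<open>n\<close> breakpoints into at most \<open>n + q (n + 1)\<close> (each affine piece of the argument crosses
  every breakpoint of \<open>\<sigma>\<close> at most once), and linear combinations add breakpoint counts. Hence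
  the network restricted to the line has at most \<open>k2 (k1 q + q (k1 q + 1)) = k1 k2 p q + k2 q\<close>
  breakpoints. A function with \<open>B\<close> breakpoints cannot have increments of alternating sign
  along more than \<open>B + 2\<close> increasing points, so it cannot fit the labels \<open>(-1)^i\<close> at the
  inputs \<open>i *\<^sub>R e\<close> for \<open>i < B + 3\<close>.\<close>

definition affine_off :: "(real \<Rightarrow> real) \<Rightarrow> real set \<Rightarrow> bool" where
  "affine_off f S \<longleftrightarrow>
     (\<forall>a b. a < b \<longrightarrow> S \<inter> {a<..<b} = {} \<longrightarrow> (\<exists>c d. \<forall>t\<in>{a..b}. f t = c * t + d))"

definition breakpoints_le :: "(real \<Rightarrow> real) \<Rightarrow> nat \<Rightarrow> bool" where
  "breakpoints_le f n \<longleftrightarrow> (\<exists>S. finite S \<and> card S \<le> n \<and> affine_off f S)"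

lemma affine_off_affine: "affine_off (\<lambda>t. c * t + d) S"
  unfolding affine_off_def by blast

lemma affine_off_add:
  assumes "affine_off f S" "affine_off g T"
  shows "affine_off (\<lambda>t. f t + g t) (S \<union> T)"
  unfolding affine_off_def
proof (intro allI impI)
  fix a b assume ab: "a < b" "(S \<union> T) \<inter> {a<..<b} = {}"
  obtain c d where "\<forall>t\<in>{a..b}. f t = c * t + d" using assms(1) ab unfolding affine_off_def by blast
  moreover obtain c' d' where "\<forall>t\<in>{a..b}. g t = c' * t + d'"
    using assms(2) ab unfolding affine_off_def by blast
  ultimately have "\<forall>t\<in>{a..b}. f t + g t = (c + c') * t + (d + d')" by (simp add: algebra_simps)
  then show "\<exists>c d. \<forall>t\<in>{a..b}. f t + g t = c * t + d" by blast
qed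

lemma affine_off_scale:
  assumes "affine_off f S"
  shows "affine_off (\<lambda>t. k * f t) S"
  unfolding affine_off_def
proof (intro allI impI)
  fix a b assume "a < b" "S \<inter> {a<..<b} = {}"
  then obtain c d where "\<forall>t\<in>{a..b}. f t = c * t + d" using assms unfolding affine_off_def by blast
  then have "\<forall>t\<in>{a..b}. k * f t = (k * c) * t + k * d" by (simp add: algebra_simps)
  then show "\<exists>c d. \<forall>t\<in>{a..b}. k * f t = c * t + d" by blast
qed

lemma affine_off_sum:
  assumes "finite I" "\<And>i. i \<in> I \<Longrightarrow> affine_off (f i) (S i)"
  shows "affine_off (\<lambda>t. \<Sum>i\<in>I. f i t) (\<Union>i\<in>I. S i)"
  using assms
proof (induction I rule: finite_induct)
  case empty
  show ?case using affine_off_affine[of 0 0] by simp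
next
  case (insert i I)
  then show ?case using affine_off_add[of "f i" "S i"] by simp
qed

lemma affine_off_comp_affine:
  assumes "affine_off \<sigma> Q" "c \<noteq> 0"
  shows "affine_off (\<lambda>t. \<sigma> (c * t + d)) ((\<lambda>u. (u - d) / c) ` Q)"
  unfolding affine_off_def
proof (intro allI impI)
  fix a b assume ab: "a < b" and free: "(\<lambda>u. (u - d) / c) ` Q \<inter> {a<..<b} = {}"
  obtain lo hi where lohi: "lo < hi" and image: "(\<lambda>t. c * t + d) ` {a..b} = {lo..hi}"
    and preimage: "\<And>u. u \<in> {lo<..<hi} \<Longrightarrow> (u - d) / c \<in> {a<..<b}"
  proof (cases "c > 0")
    case True
    have "(\<lambda>t. c * t + d) ` {a..b} = {c * a + d..c * b + d}"
      using ab True by (subst image_affinity_atLeastAtMost) simp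
    moreover have "(u - d) / c \<in> {a<..<b}" if "u \<in> {c * a + d<..<c * b + d}" for u
      using that True by (auto simp: field_simps)
    ultimately show thesis using ab True by (intro that[of "c * a + d" "c * b + d"]) auto
  next
    case False
    with assms(2) have "c < 0" by simp
    have "(\<lambda>t. c * t + d) ` {a..b} = {c * b + d..c * a + d}"
      using ab \<open>c < 0\<close> by (subst image_affinity_atLeastAtMost) simp
    moreover have "(u - d) / c \<in> {a<..<b}" if "u \<in> {c * b + d<..<c * a + d}" for u
      using that \<open>c < 0\<close> by (auto simp: field_simps)
    ultimately show thesis using ab \<open>c < 0\<close> by (intro that[of "c * b + d" "c * a + d"]) auto
  qed
  have "Q \<inter> {lo<..<hi} = {}" using free preimage by blast
  then obtain c' d' where \<sigma>: "\<forall>u\<in>{lo..hi}. \<sigma> u = c' * u + d'"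
    using assms(1) lohi unfolding affine_off_def by blast
  have "\<forall>t\<in>{a..b}. \<sigma> (c * t + d) = (c' * c) * t + (c' * d + d')"
  proof
    fix t assume "t \<in> {a..b}"
    then have "c * t + d \<in> {lo..hi}" using image by blast
    then show "\<sigma> (c * t + d) = (c' * c) * t + (c' * d + d')" using \<sigma> by (simp add: algebra_simps)
  qed
  then show "\<exists>k e. \<forall>t\<in>{a..b}. \<sigma> (c * t + d) = k * t + e" by blast
qed

lemma card_le_Suc_card_if_separated:
  fixes A T :: "real set"
  assumes "finite T" and sep: "\<And>x y. x \<in> A \<Longrightarrow> y \<in> A \<Longrightarrow> x < y \<Longrightarrow> \<exists>t\<in>T. x < t \<and> t < y"
  shows "finite A \<and> card A \<le> card T + 1"
proof -
  define h where "h x = (if \<exists>s\<in>T. x < s then Some (Min {s\<in>T. x < s}) else None)" for x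
  have h_Some: "h x = Some (Min {s\<in>T. x < s}) \<and> Min {s\<in>T. x < s} \<in> T \<and>
      x < Min {s\<in>T. x < s} \<and> Min {s\<in>T. x < s} \<le> t"
    if "t \<in> T" "x < t" for x t
  proof -
    have "Min {s\<in>T. x < s} \<in> {s\<in>T. x < s}" using that \<open>finite T\<close> by (intro Min_in) auto
    moreover have "Min {s\<in>T. x < s} \<le> t" using that \<open>finite T\<close> by (intro Min_le) auto
    ultimately show ?thesis using that by (auto simp: h_def)
  qed
  have "inj_on h A"
  proof (rule linorder_inj_onI')
    fix x y assume "x \<in> A" "y \<in> A" "x < y"
    then obtain t where t: "t \<in> T" "x < t" "t < y" using sep by blast
    show "h x \<noteq> h y"
    proof (cases "\<exists>s\<in>T. y < s")
      case True
      then obtain s where "s \<in> T" "y < s" by blast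
      then show ?thesis using h_Some[OF t(1,2)] h_Some[of s y] t(3) by auto
    next
      case False
      then show ?thesis using h_Some[OF t(1,2)] by (simp add: h_def)
    qed
  qed
  moreover have "h ` A \<subseteq> insert None (Some ` T)"
    using h_Some by (auto simp: h_def)
  moreover have "card (insert None (Some ` T)) = card T + 1"
    using \<open>finite T\<close> by (simp add: card_image)
  ultimately show ?thesis
    using \<open>finite T\<close> card_inj_on_le inj_on_finite by (metis finite.insertI finite_imageI)
qed

lemma card_level_set_boundary_le:
  assumes g: "affine_off g T" and "finite T"
  shows "finite (g -` {s} - interior (g -` {s}) - T) \<and>
         card (g -` {s} - interior (g -` {s}) - T) \<le> card T + 1"
proof (rule card_le_Suc_card_if_separated[OF \<open>finite T\<close>])
  fix x y assume x: "x \<in> g -` {s} - interior (g -` {s}) - T" and y: "y \<in> g -` {s} - interior (g -` {s}) - T"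
    and "x < y"
  show "\<exists>t\<in>T. x < t \<and> t < y"
  proof (rule ccontr)
    assume no_t: "\<not> (\<exists>t\<in>T. x < t \<and> t < y)"
    have "open ({..<y} - T)" using \<open>finite T\<close> by (intro open_Diff finite_imp_closed) auto
    moreover have "x \<in> {..<y} - T" using x \<open>x < y\<close> by auto
    ultimately obtain e where "e > 0" and ball: "ball x e \<subseteq> {..<y} - T"
      using open_contains_ball by blast
    have "T \<inter> {x - e<..<y} = {}"
    proof safe
      fix t assume "t \<in> T" "t \<in> {x - e<..<y}"
      with no_t have "t \<in> ball x e" by (force simp: dist_real_def)
      with ball \<open>t \<in> T\<close> show "t \<in> {}" by blast
    qed
    moreover have "x - e < y" using \<open>e > 0\<close> \<open>x < y\<close> by linarith
    ultimately obtain c d where cd: "\<forall>t\<in>{x - e..y}. g t = c * t + d"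
      using g unfolding affine_off_def by blast
    have "c * x + d = c * y + d" using cd x y \<open>e > 0\<close> \<open>x < y\<close> by auto
    with \<open>x < y\<close> have "c = 0" by simp
    then have "{x - e<..<y} \<subseteq> g -` {s}" using cd x \<open>e > 0\<close> \<open>x < y\<close> by auto
    then have "x \<in> interior (g -` {s})"
      using \<open>e > 0\<close> \<open>x < y\<close> by (intro interiorI[OF open_greaterThanLessThan]) auto
    with x show False by blast
  qed
qed

lemma not_in_interior_level_set_of_affine:
  fixes g :: "real \<Rightarrow> real"
  assumes "\<forall>t\<in>{a..b}. g t = c * t + d" "c \<noteq> 0" "x \<in> {a<..<b}"
  shows "x \<notin> interior (g -` {g x})"
proof
  assume "x \<in> interior (g -` {g x})"
  then obtain e where "e > 0" and ball: "ball x e \<subseteq> g -` {g x}" by (meson mem_interior)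
  obtain m where "0 < m" "m \<le> b - x" "m \<le> e"
    using \<open>e > 0\<close> assms(3) by (intro that[of "min e (b - x)"]) auto
  define y where "y = x + m / 2"
  have "x < y" "y < b" "dist y x < e" using \<open>0 < m\<close> \<open>m \<le> b - x\<close> \<open>m \<le> e\<close> by (auto simp: y_def dist_real_def)
  then have "g y = g x" using ball by (auto simp: dist_commute)
  then have "c * y = c * x" using assms(1,3) \<open>x < y\<close> \<open>y < b\<close> by auto
  with \<open>x < y\<close> assms(2) show False by simp
qed

text \<open>Besides the breakpoints of \<open>g\<close>, \<open>\<sigma> \<circ> g\<close> can only break where \<open>g\<close> passes through a
  breakpoint \<open>s\<close> of \<open>\<sigma>\<close> without being constant near that point.\<close>

lemma affine_off_comp:
  assumes g: "affine_off g T" "finite T" and \<sigma>: "affine_off \<sigma> Q" "finite Q"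
  shows "\<exists>S. finite S \<and> card S \<le> card T + card Q * (card T + 1) \<and> affine_off (\<lambda>t. \<sigma> (g t)) S"
proof -
  define A where "A s = g -` {s} - interior (g -` {s}) - T" for s
  define S where "S = T \<union> (\<Union>s\<in>Q. A s)"
  have A: "finite (A s) \<and> card (A s) \<le> card T + 1" for s
    unfolding A_def by (rule card_level_set_boundary_le[OF g])
  have "card (\<Union>s\<in>Q. A s) \<le> (\<Sum>s\<in>Q. card (A s))" by (rule card_UN_le[OF \<open>finite Q\<close>])
  also have "\<dots> \<le> card Q * (card T + 1)"
    using sum_bounded_above[of Q "\<lambda>s. card (A s)" "card T + 1"] A by simp
  finally have "finite S" "card S \<le> card T + card Q * (card T + 1)"
    using A \<open>finite T\<close> \<open>finite Q\<close> card_Un_le[of T "\<Union>s\<in>Q. A s"] by (auto simp: S_def)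
  moreover have "affine_off (\<lambda>t. \<sigma> (g t)) S"
    unfolding affine_off_def
  proof (intro allI impI)
    fix a b assume "a < b" and free: "S \<inter> {a<..<b} = {}"
    then obtain c d where cd: "\<forall>t\<in>{a..b}. g t = c * t + d"
      using g(1) unfolding affine_off_def S_def by blast
    show "\<exists>k e. \<forall>t\<in>{a..b}. \<sigma> (g t) = k * t + e"
    proof (cases "c = 0")
      case True
      then show ?thesis using cd by (intro exI[of _ 0] exI[of _ "\<sigma> d"]) simp
    next
      case False
      have "(\<lambda>u. (u - d) / c) ` Q \<inter> {a<..<b} = {}"
      proof safe
        fix u assume "u \<in> Q" and x: "(u - d) / c \<in> {a<..<b}"
        then have "g ((u - d) / c) = u" using cd False by auto
        then have "(u - d) / c \<in> A u"
          using free x not_in_interior_level_set_of_affine[OF cd False x] by (auto simp: A_def S_def)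
        then show "(u - d) / c \<in> {}" using free x \<open>u \<in> Q\<close> by (auto simp: S_def)
      qed
      then obtain k e where "\<forall>t\<in>{a..b}. \<sigma> (c * t + d) = k * t + e"
        using affine_off_comp_affine[OF \<sigma>(1) False] \<open>a < b\<close> unfolding affine_off_def by blast
      then show ?thesis using cd by auto
    qed
  qed
  ultimately show ?thesis by blast
qed

lemma breakpoints_le_affine: "breakpoints_le (\<lambda>t. c * t + d) 0"
  unfolding breakpoints_le_def by (intro exI[of _ "{}"]) (simp add: affine_off_affine)

lemma breakpoints_le_comp:
  assumes "breakpoints_le \<sigma> q" "breakpoints_le g n"
  shows "breakpoints_le (\<lambda>t. \<sigma> (g t)) (n + q * (n + 1))"
proof -
  obtain Q where Q: "finite Q" "card Q \<le> q" "affine_off \<sigma> Q"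
    using assms(1) unfolding breakpoints_le_def by blast
  obtain T where T: "finite T" "card T \<le> n" "affine_off g T"
    using assms(2) unfolding breakpoints_le_def by blast
  obtain S where "finite S" "card S \<le> card T + card Q * (card T + 1)" "affine_off (\<lambda>t. \<sigma> (g t)) S"
    using affine_off_comp[OF T(3,1) Q(3,1)] by blast
  moreover have "card T + card Q * (card T + 1) \<le> n + q * (n + 1)"
    using Q(2) T(2) by (intro add_mono mult_le_mono) auto
  ultimately show ?thesis unfolding breakpoints_le_def by (meson order_trans)
qed

lemma breakpoints_le_linear_combination:
  assumes "\<And>j. j < k \<Longrightarrow> breakpoints_le (h j) n"
  shows "breakpoints_le (\<lambda>t. (\<Sum>j<k. w j * h j t) + b) (k * n)"
proof -
  obtain S where S: "\<And>j. j < k \<Longrightarrow> finite (S j) \<and> card (S j) \<le> n \<and> affine_off (h j) (S j)"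
    using assms unfolding breakpoints_le_def by metis
  have "affine_off (\<lambda>t. (\<Sum>j<k. w j * h j t) + (0 * t + b)) ((\<Union>j<k. S j) \<union> {})"
    using S by (intro affine_off_add affine_off_sum affine_off_scale affine_off_affine) auto
  moreover have "card (\<Union>j<k. S j) \<le> (\<Sum>j<k. card (S j))" by (rule card_UN_le) simp
  moreover have "(\<Sum>j<k. card (S j)) \<le> k * n"
    using sum_bounded_above[of "{..<k}" "\<lambda>j. card (S j)" n] S by simp
  ultimately show ?thesis
    using S unfolding breakpoints_le_def by (intro exI[of _ "\<Union>j<k. S j"]) auto
qed

lemma Inf_interval_between:
  fixes B :: "real set"
  assumes "is_interval B" "u \<notin> B" "v \<in> B" "u < v"
  shows "bdd_below B \<and> u \<le> Inf B \<and> Inf B \<le> v"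
proof -
  have "u \<le> w" if "w \<in> B" for w
    using assms that unfolding is_interval_1 by (meson less_imp_le not_le)
  then have "bdd_below B" by (rule bdd_belowI)
  moreover have "u \<le> Inf B" using \<open>\<And>w. w \<in> B \<Longrightarrow> u \<le> w\<close> assms(3) by (intro cInf_greatest) auto
  moreover have "Inf B \<le> v" using \<open>bdd_below B\<close> assms(3) by (rule cInf_lower[rotated])
  ultimately show ?thesis by blast
qed

lemma affine_on_closed_if_affine_on_open:
  fixes \<sigma> :: "real \<Rightarrow> real"
  assumes "continuous_on UNIV \<sigma>" "a < b" "\<forall>x\<in>{a<..<b}. \<sigma> x = c * x + d"
  shows "\<forall>x\<in>{a..b}. \<sigma> x = c * x + d"
proof -
  have "closed {x. \<sigma> x = c * x + d}"
    using assms(1) by (intro closed_Collect_eq continuous_intros) auto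
  then have "closure {a<..<b} \<subseteq> {x. \<sigma> x = c * x + d}"
    using assms(3) by (intro closure_minimal) auto
  then show ?thesis using assms(2) by auto
qed

lemma greaterThanLessThan_subset_piece:
  fixes I :: "nat \<Rightarrow> real set"
  assumes int: "\<forall>i<p. is_interval (I i)" and disj: "\<forall>i<p. \<forall>j<p. i \<noteq> j \<longrightarrow> I i \<inter> I j = {}"
    and cover: "(\<Union>i<p. I i) = UNIV"
    and no_Inf: "\<forall>l<p. bdd_below (I l) \<longrightarrow> Inf (I l) \<notin> {a<..<b}"
    and i: "i < p" "m \<in> I i" and m: "m \<in> {a<..<b}"
  shows "{a<..<b} \<subseteq> I i"
proof
  fix x assume x: "x \<in> {a<..<b}"
  obtain j where j: "j < p" "x \<in> I j" using cover by blast
  show "x \<in> I i"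
  proof (rule ccontr)
    assume "x \<notin> I i"
    with i(2) have "x \<noteq> m" by blast
    then consider "x < m" | "m < x" by linarith
    then show False
    proof cases
      case 1
      then have "bdd_below (I i) \<and> x \<le> Inf (I i) \<and> Inf (I i) \<le> m"
        by (rule Inf_interval_between[OF int[rule_format, OF i(1)] \<open>x \<notin> I i\<close> i(2)])
      then show False using no_Inf i(1) x m by force
    next
      case 2
      have "m \<notin> I j" using disj i j \<open>x \<notin> I i\<close> by blast
      then have "bdd_below (I j) \<and> m \<le> Inf (I j) \<and> Inf (I j) \<le> x"
        using 2 by (rule Inf_interval_between[OF int[rule_format, OF j(1)] _ j(2)])
      then show False using no_Inf j(1) x m by force
    qed
  qed
qed

lemma affine_pieces_le_imp_breakpoints_le:
  fixes \<sigma> :: "real \<Rightarrow> real"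
  assumes cont: "continuous_on UNIV \<sigma>" and "affine_pieces_le \<sigma> p"
  shows "breakpoints_le \<sigma> (p - 1)"
proof -
  obtain I where int: "\<forall>i<p. is_interval (I i)" and disj: "\<forall>i<p. \<forall>j<p. i \<noteq> j \<longrightarrow> I i \<inter> I j = {}"
    and cover: "(\<Union>i<p. I i) = UNIV" and aff: "\<forall>i<p. \<exists>c d. \<forall>x\<in>I i. \<sigma> x = c * x + d"
    using assms(2) unfolding affine_pieces_le_def by blast
  have "\<exists>i0<p. \<not> bdd_below (I i0)"
  proof (rule ccontr)
    assume "\<not> (\<exists>i0<p. \<not> bdd_below (I i0))"
    then have "bdd_below (UNIV :: real set)" unfolding cover[symmetric] by simp
    then obtain M :: real where "\<And>x. M \<le> x" by (meson UNIV_I bdd_below.E)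
    then have "M \<le> M - 1" by blast
    then show False by simp
  qed
  then obtain i0 where "i0 < p" "\<not> bdd_below (I i0)" by auto
  define J where "J = {i. i < p \<and> bdd_below (I i)}"
  define Q where "Q = (\<lambda>i. Inf (I i)) ` J"
  have J: "J \<subseteq> {..<p} - {i0}" using \<open>\<not> bdd_below (I i0)\<close> by (auto simp: J_def)
  then have "finite J" by (rule finite_subset) simp
  have "card Q \<le> card J" unfolding Q_def using \<open>finite J\<close> by (rule card_image_le)
  also have "\<dots> \<le> card ({..<p} - {i0})" using J by (intro card_mono) auto
  also have "\<dots> = p - 1" using \<open>i0 < p\<close> by simp
  finally have "card Q \<le> p - 1" .
  moreover have "finite Q" unfolding Q_def using \<open>finite J\<close> by simp
  moreover have "affine_off \<sigma> Q"
    unfolding affine_off_def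
  proof (intro allI impI)
    fix a b :: real assume "a < b" and free: "Q \<inter> {a<..<b} = {}"
    have m: "(a + b) / 2 \<in> {a<..<b}" using \<open>a < b\<close> by simp
    obtain i where i: "i < p" "(a + b) / 2 \<in> I i" using cover by blast
    have "\<forall>l<p. bdd_below (I l) \<longrightarrow> Inf (I l) \<notin> {a<..<b}"
      using free unfolding Q_def J_def by blast
    then have "{a<..<b} \<subseteq> I i" using greaterThanLessThan_subset_piece[OF int disj cover _ i m] by blast
    moreover obtain c d where "\<forall>x\<in>I i. \<sigma> x = c * x + d" using aff i by blast
    ultimately have "\<forall>x\<in>{a..b}. \<sigma> x = c * x + d"
      using affine_on_closed_if_affine_on_open[OF cont \<open>a < b\<close>] by blast
    then show "\<exists>c d. \<forall>x\<in>{a..b}. \<sigma> x = c * x + d" by blast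
  qed
  ultimately show ?thesis unfolding breakpoints_le_def by blast
qed

definition alternating :: "(real \<Rightarrow> real) \<Rightarrow> (nat \<Rightarrow> real) \<Rightarrow> nat \<Rightarrow> bool" where
  "alternating f x n \<longleftrightarrow> (\<forall>j<n. x j < x (Suc j)) \<and>
     (\<forall>j. j + 2 \<le> n \<longrightarrow> (f (x (Suc j)) - f (x j)) * (f (x (Suc (Suc j))) - f (x (Suc j))) < 0)"

lemma alternating_le: "alternating f x n \<Longrightarrow> m \<le> n \<Longrightarrow> alternating f x m"
  unfolding alternating_def by auto

lemma affine_no_sign_change:
  fixes f :: "real \<Rightarrow> real"
  assumes "\<forall>t\<in>{u..w}. f t = c * t + d" "u < v" "v < w"
  shows "\<not> (f v - f u) * (f w - f v) < 0"
proof -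
  have "f u = c * u + d" "f v = c * v + d" "f w = c * w + d" using assms by auto
  then have "(f v - f u) * (f w - f v) = (c * c) * ((v - u) * (w - v))" by (simp add: algebra_simps)
  moreover have "(v - u) * (w - v) > 0" using assms(2,3) by simp
  ultimately show ?thesis by (metis less_le_not_le mult_nonneg_nonneg zero_le_square)
qed

lemma mult_neg_diff_if_opposite_signs:
  fixes P D c h :: real
  assumes "P * D < 0" "D * c < 0" "0 \<le> h"
  shows "P * (D - c * h) < 0"
proof (cases "D > 0")
  case True
  with assms have "P < 0" "c < 0" by (auto simp: mult_less_0_iff)
  moreover have "D - c * h > 0" using True \<open>c < 0\<close> assms(3) by (smt (verit) mult_nonpos_nonneg)
  ultimately show ?thesis by (simp add: mult_neg_pos)
next
  case False
  with assms have "D < 0" "P > 0" "c > 0" by (auto simp: mult_less_0_iff)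
  moreover have "D - c * h < 0" using \<open>D < 0\<close> \<open>c > 0\<close> assms(3) by (smt (verit) mult_nonneg_nonneg)
  ultimately show ?thesis by (simp add: mult_pos_neg)
qed

lemma alternating_move_point:
  assumes alt: "alternating f x (Suc (Suc m))" and b: "x m < b" "b < x (Suc m)"
    and aff: "\<forall>t\<in>{b..x (Suc (Suc m))}. f t = c * t + d"
  shows "alternating f (x(Suc m := b)) (Suc m)"
  unfolding alternating_def
proof (intro conjI allI impI)
  fix j assume "j < Suc m"
  then show "(x(Suc m := b)) j < (x(Suc m := b)) (Suc j)"
    using alt b unfolding alternating_def by (cases "j = m") auto
next
  fix j assume j: "j + 2 \<le> Suc m"
  show "(f ((x(Suc m := b)) (Suc j)) - f ((x(Suc m := b)) j)) *
        (f ((x(Suc m := b)) (Suc (Suc j))) - f ((x(Suc m := b)) (Suc j))) < 0"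
  proof (cases "m = Suc j")
    case False
    then show ?thesis using alt j unfolding alternating_def by auto
  next
    case True
    define P D where "P = f (x m) - f (x j)" and "D = f (x (Suc m)) - f (x m)"
    have "P * D < 0" "D * (f (x (Suc (Suc m))) - f (x (Suc m))) < 0"
      using alt True unfolding alternating_def P_def D_def by auto
    moreover have "x (Suc m) < x (Suc (Suc m))" using alt unfolding alternating_def by auto
    moreover have "f (x (Suc (Suc m))) - f (x (Suc m)) = c * (x (Suc (Suc m)) - x (Suc m))"
      and f_b: "f b - f (x m) = D - c * (x (Suc m) - b)"
      using aff b \<open>x (Suc m) < x (Suc (Suc m))\<close> by (auto simp: D_def algebra_simps)
    ultimately have "D * c < 0" by (auto simp: mult_less_0_iff zero_less_mult_iff)
    then have "P * (f b - f (x m)) < 0"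
      using mult_neg_diff_if_opposite_signs[OF \<open>P * D < 0\<close>] b unfolding f_b by simp
    then show ?thesis using True by (simp add: P_def)
  qed
qed

lemma alternating_cut:
  fixes f :: "real \<Rightarrow> real"
  assumes alt: "alternating f x (Suc (Suc m))" and "b < x (Suc (Suc m))"
    and aff: "\<forall>t\<in>{b..x (Suc (Suc m))}. f t = c * t + d"
  obtains y where "alternating f y (Suc m)" "y (Suc m) \<le> b"
proof (cases "x (Suc m) \<le> b")
  case True
  then show thesis using that[of x] alternating_le[OF alt, of "Suc m"] by simp
next
  case False
  have incr: "x m < x (Suc m)" "x (Suc m) < x (Suc (Suc m))"
    and sign: "(f (x (Suc m)) - f (x m)) * (f (x (Suc (Suc m))) - f (x (Suc m))) < 0"
    using alt unfolding alternating_def by auto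
  have "x m < b"
  proof (rule ccontr)
    assume "\<not> x m < b"
    then have "\<forall>t\<in>{x m..x (Suc (Suc m))}. f t = c * t + d" using aff by auto
    then show False using affine_no_sign_change incr sign by blast
  qed
  then have "alternating f (x(Suc m := b)) (Suc m)"
    using alternating_move_point[OF alt _ _ aff] False by simp
  then show thesis using that[of "x(Suc m := b)"] by simp
qed

text \<open>Affineness is only required up to the last point, so that after removing the largest
  breakpoint \<open>b\<close> the induction hypothesis applies to an alternating sequence ending at or
  before \<open>b\<close>.\<close>

lemma alternating_le_card_breakpoints:
  fixes f :: "real \<Rightarrow> real"
  assumes "finite S"
    and "\<And>a b. a < b \<Longrightarrow> b \<le> x n \<Longrightarrow> S \<inter> {a<..<b} = {} \<Longrightarrow> \<exists>c d. \<forall>t\<in>{a..b}. f t = c * t + d"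
    and "alternating f x n"
  shows "n \<le> card S + 1"
  using assms
proof (induction S arbitrary: x n rule: finite_linorder_max_induct)
  case empty
  show ?case
  proof (rule ccontr)
    assume "\<not> n \<le> card {} + 1"
    then obtain m where n: "n = Suc (Suc m)" by (intro that[of "n - 2"]) simp
    with empty.prems(2) have "x m < x (Suc m)" "x (Suc m) < x n"
      and alt: "(f (x (Suc m)) - f (x m)) * (f (x n) - f (x (Suc m))) < 0"
      unfolding alternating_def by auto
    moreover obtain c d where "\<forall>t\<in>{x m..x n}. f t = c * t + d"
      using empty.prems(1) \<open>x m < x (Suc m)\<close> \<open>x (Suc m) < x n\<close> by fastforce
    ultimately show False using affine_no_sign_change by blast
  qed
next
  case (insert b A)
  have "b \<notin> A" using insert.hyps(2) by blast
  then have card: "card (insert b A) = card A + 1" using insert.hyps(1) by simp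
  have IH: "k \<le> card A + 1" if "alternating f y k" "y k \<le> b" "y k \<le> x n" for y k
  proof (rule insert.IH[OF _ that(1)])
    fix a b' assume "a < b'" "b' \<le> y k" "A \<inter> {a<..<b'} = {}"
    then show "\<exists>c d. \<forall>t\<in>{a..b'}. f t = c * t + d"
      using insert.prems(1)[of a b'] that(2,3) by auto
  qed
  consider "x n \<le> b" | "n < 2" | m where "b < x n" "n = Suc (Suc m)"
    by (metis add_2_eq_Suc le_add_diff_inverse not_le)
  then show ?case
  proof cases
    case 1
    then show ?thesis using IH[OF insert.prems(2)] card by simp
  next
    case 2
    then show ?thesis by simp
  next
    case (3 m)
    have "insert b A \<inter> {b<..<x n} = {}" using insert.hyps(2) by auto
    then obtain c d where "\<forall>t\<in>{b..x n}. f t = c * t + d"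
      using insert.prems(1) \<open>b < x n\<close> by fastforce
    then obtain y where "alternating f y (Suc m)" "y (Suc m) \<le> b"
      using alternating_cut insert.prems(2) \<open>b < x n\<close> 3(2) by metis
    then show ?thesis using IH[of y "Suc m"] \<open>b < x n\<close> card 3(2) by simp
  qed
qed

lemma breakpoints_le_alternating_signs:
  assumes "breakpoints_le f n" "\<And>i. i < N \<Longrightarrow> f (real i) = (-1) ^ i"
  shows "N \<le> n + 2"
proof (cases "N = 0")
  case False
  obtain S where S: "finite S" "card S \<le> n" "affine_off f S"
    using assms(1) unfolding breakpoints_le_def by blast
  have "alternating f real (N - 1)"
    unfolding alternating_def
  proof (intro conjI allI impI)
    fix j assume "j + 2 \<le> N - 1"
    then show "(f (real (Suc j)) - f (real j)) * (f (real (Suc (Suc j))) - f (real (Suc j))) < 0"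
      using assms(2)[of j] assms(2)[of "Suc j"] assms(2)[of "Suc (Suc j)"] by (cases "even j") auto
  qed simp
  then have "N - 1 \<le> card S + 1"
    using alternating_le_card_breakpoints[OF S(1)] S(3) unfolding affine_off_def by blast
  then show ?thesis using S(2) by linarith
qed simp

lemma breakpoints_le_net2_along_line:
  assumes "breakpoints_le \<sigma> q"
  shows "breakpoints_le (\<lambda>t. net2 \<sigma> k1 k2 W1 b1 W2 b2 W3 b3 (t *\<^sub>R e))
           (k2 * (k1 * q + q * (k1 * q + 1)))"
proof -
  have layer1: "breakpoints_le (\<lambda>t. \<sigma> ((W1 j \<bullet> e) * t + b1 j)) q" for j
    using breakpoints_le_comp[OF assms breakpoints_le_affine] by simp
  have layer2: "breakpoints_le (\<lambda>t. \<sigma> ((\<Sum>j<k1. W2 m j * \<sigma> ((W1 j \<bullet> e) * t + b1 j)) + b2 m))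
                  (k1 * q + q * (k1 * q + 1))" for m
    by (rule breakpoints_le_comp[OF assms breakpoints_le_linear_combination]) (rule layer1)
  have "net2 \<sigma> k1 k2 W1 b1 W2 b2 W3 b3 (t *\<^sub>R e) =
        (\<Sum>m<k2. W3 m * \<sigma> ((\<Sum>j<k1. W2 m j * \<sigma> ((W1 j \<bullet> e) * t + b1 j)) + b2 m)) + b3" for t
    by (simp add: net2_def mult.commute)
  then show ?thesis
    using breakpoints_le_linear_combination[OF layer2] by simp
qed

lemma memorizes_le_breakpoints:
  assumes "memorizes TYPE('n::finite) \<sigma> k1 k2 N" "breakpoints_le \<sigma> q"
  shows "N \<le> k2 * (k1 * q + q * (k1 * q + 1)) + 2"
proof -
  define e :: "real^'n" where "e = (\<chi> i. 1)"
  have "e \<noteq> 0" unfolding e_def by (metis vec_lambda_beta zero_index zero_neq_one)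
  then have "inj_on (\<lambda>i. real i *\<^sub>R e) {..<N}" by (auto simp: inj_on_def)
  moreover have "\<forall>i<N. (-1::real) ^ i \<in> {-1..1}" by (auto simp: minus_one_power_iff)
  ultimately obtain W1 b1 W2 b2 W3 b3
    where "\<forall>i<N. net2 \<sigma> k1 k2 W1 b1 W2 b2 W3 b3 (real i *\<^sub>R e) = (-1) ^ i"
    using assms(1) unfolding memorizes_def by blast
  then show ?thesis
    using breakpoints_le_alternating_signs[OF breakpoints_le_net2_along_line[OF assms(2)]] by blast
qed

theorem corollary2:
  fixes \<sigma> :: "real \<Rightarrow> real" and p d1 d2 k1 k2 :: nat and \<alpha>1 \<alpha>2 :: real
  assumes "continuous_on UNIV \<sigma>"
    and "linear_pieces \<sigma> p" and "p \<ge> 2"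
    and "d1 \<ge> 1" and "d2 \<ge> 1"
    and "0 < \<alpha>1" and "\<alpha>1 \<le> 1" and "0 < \<alpha>2" and "\<alpha>2 \<le> 1"
    and "\<alpha>1 * real d1 = real k1" and "k1 \<ge> 1"
    and "\<alpha>2 * real d2 = real k2" and "k2 \<ge> 1"
    and "memorizes TYPE('n::finite) \<sigma> k1 k2 N"
  shows "real N \<le> \<alpha>1 * \<alpha>2 * real d1 * real d2 * real p * (real p - 1)
                   + \<alpha>2 * real d2 * (real p - 1) + 2"
proof -
  define q where "q = p - 1"
  have p: "real p = real q + 1" using assms(3) by (simp add: q_def)
  have "breakpoints_le \<sigma> q"
    using affine_pieces_le_imp_breakpoints_le[OF assms(1)] assms(2)
    unfolding linear_pieces_def q_def by blast
  then have "N \<le> k2 * (k1 * q + q * (k1 * q + 1)) + 2"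
    using memorizes_le_breakpoints[OF assms(14)] by blast
  then have "real N \<le> real (k2 * (k1 * q + q * (k1 * q + 1)) + 2)" by (simp only: of_nat_le_iff)
  also have "\<dots> = real k1 * real k2 * (real q + 1) * real q + real k2 * real q + 2"
    by (simp add: algebra_simps)
  also have "\<dots> = \<alpha>1 * \<alpha>2 * real d1 * real d2 * real p * (real p - 1) + \<alpha>2 * real d2 * (real p - 1) + 2"
    unfolding p assms(10,12)[symmetric] by (simp add: algebra_simps)
  finally show ?thesis .
qed

end
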